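(* Let $(\nu_d,\nu^\Box_d)_{d\in\mathbb N}$ be a sequence of pairs of Borel probability measures on $\mathbb R$ such that each $\nu_d$ has finite moments of all orders, each $\nu^\Box_d$ is compactly supported, $\lim_{d\to\infty}|m_k(\nu_d)-m_k(\nu^\Box_d)|=0$ for every $k\in\mathbb N$, and there is $M'>0$ with $\operatorname{supp}\nu^\Box_d\subset[-M',M']$ for all $d$. Then for every $\gamma>0$ and $M>0$, \[\lim_{d\to\infty}\sup_{\mu\in\mathcal B_M}\big|H_\gamma(\nu_d,\mu)-H_\gamma(\nu^\Box_d,\mu)\big|=0.\]
   Context: $m_k(\mu)=\int x^k\mu(dx)$. $\mathcal B_M$ is the set of Borel probability measures on $\mathbb R$ with support in $[-M,M]$. $P_\gamma(x)=\frac{\gamma}{\pi(x^2+\gamma^2)}$, $(P_\gamma*\nu)(x)=\int P_\gamma(x-t)\nu(dt)$, $G_\mu(z)=\int\frac{\mu(dt)}{z-t}$. For compactly supported $\mu$ and $\nu$ with finite second moment, $H_\gamma(\nu,\mu)=\int\ell_\gamma(x,\mu)(P_\gamma*\nu)(x)dx$ with $\ell_\gamma(x,\mu)=-\log[-\frac1\pi\operatorname{Im}G_\mu(x+i\gamma)]$. *)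

theory Defs
  imports "HOL-Probability.Probability"
begin

definition moment :: "nat \<Rightarrow> real measure \<Rightarrow> real" where
  "moment k \<mu> = (\<integral>x. x ^ k \<partial>\<mu>)"

definition borel_prob :: "real measure \<Rightarrow> bool" where
  "borel_prob \<mu> \<longleftrightarrow> prob_space \<mu> \<and> sets \<mu> = sets borel"

definition supp_within :: "real measure \<Rightarrow> real \<Rightarrow> bool" where
  "supp_within \<mu> M \<longleftrightarrow> (AE x in \<mu>. x \<in> {-M..M})"

definition B :: "real \<Rightarrow> real measure set" where
  "B M = {\<mu>. borel_prob \<mu> \<and> supp_within \<mu> M}"

definition compactly_supported :: "real measure \<Rightarrow> bool" where
  "compactly_supported \<mu> \<longleftrightarrow> (\<exists>K. supp_within \<mu> K)"

definition Poisson :: "real \<Rightarrow> real \<Rightarrow> real" where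
  "Poisson \<gamma> x = \<gamma> / (pi * (x\<^sup>2 + \<gamma>\<^sup>2))"

definition Poisson_conv :: "real \<Rightarrow> real measure \<Rightarrow> real \<Rightarrow> real" where
  "Poisson_conv \<gamma> \<nu> x = (\<integral>t. Poisson \<gamma> (x - t) \<partial>\<nu>)"

definition Stieltjes :: "real measure \<Rightarrow> complex \<Rightarrow> complex" where
  "Stieltjes \<mu> z = (\<integral>t. 1 / (z - complex_of_real t) \<partial>\<mu>)"

definition ell :: "real \<Rightarrow> real \<Rightarrow> real measure \<Rightarrow> real" where
  "ell \<gamma> x \<mu> = - ln (- (1 / pi) * Im (Stieltjes \<mu> (Complex x \<gamma>)))"

definition H :: "real \<Rightarrow> real measure \<Rightarrow> real measure \<Rightarrow> real" where
  "H \<gamma> \<nu> \<mu> = (\<integral>x. ell \<gamma> x \<mu> * Poisson_conv \<gamma> \<nu> x \<partial>lborel)"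

end

theory Submission
  imports Defs
begin

text \<open>
  Since -(1/pi) Im G_mu(x + i gamma) is the Poisson integral (P_gamma * mu)(x), which for mu in
  B M lies between gamma / (pi ((|x| + M)^2 + gamma^2)) and 1 / (pi gamma), the loss satisfies
  |ell_gamma(x, mu)| <= c + 2 ln (1 + |x|) uniformly in mu. Hence the supremum is at most
  the integral of (c + 2 ln (1 + |x|)) |P_gamma * nu_d - P_gamma * nu'_d|, where nu'_d are the
  compactly supported measures. Poisson integrals decay like (1 + m_2) / (1 + x^2) and the second
  moments are bounded in d, so by dominated convergence it suffices that
  (P_gamma * nu_d)(x) - (P_gamma * nu'_d)(x) tends to 0 for each x. This holds for every bounded
  continuous integrand: approximate it by a polynomial on [-R, R] with R > M', where moment
  convergence applies, and bound the error outside [-R, R] by a multiple of (t / R)^(2j), whose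
  nu_d-integral is eventually at most (M'^(2j) + 1) / R^(2j).
\<close>

section \<open>The Poisson kernel\<close>

lemma Poisson_pos: "\<gamma> > 0 \<Longrightarrow> 0 < Poisson \<gamma> y"
  unfolding Poisson_def by (simp add: add_nonneg_pos)

lemma Poisson_le:
  assumes "\<gamma> > 0"
  shows "Poisson \<gamma> y \<le> 1 / (pi * \<gamma>)"
proof -
  have "\<gamma> / (pi * (y\<^sup>2 + \<gamma>\<^sup>2)) \<le> \<gamma> / (pi * \<gamma>\<^sup>2)"
    using assms by (intro divide_left_mono mult_left_mono) (auto intro!: mult_pos_pos add_nonneg_pos)
  then show ?thesis
    using assms by (simp add: Poisson_def power2_eq_square)
qed

lemma Poisson_ge:
  assumes "\<gamma> > 0" "\<bar>y\<bar> \<le> r"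
  shows "\<gamma> / (pi * (r\<^sup>2 + \<gamma>\<^sup>2)) \<le> Poisson \<gamma> y"
proof -
  have "\<bar>y\<bar>\<^sup>2 \<le> r\<^sup>2"
    using assms(2) by (intro power_mono) auto
  then show ?thesis
    unfolding Poisson_def using assms(1)
    by (intro divide_left_mono mult_left_mono) (auto intro!: mult_pos_pos add_nonneg_pos)
qed

lemma Poisson_shift_tail:
  assumes "\<gamma> > 0"
  shows "(1 + x\<^sup>2) * Poisson \<gamma> (x - t) \<le> (2 / (pi * \<gamma>) + 2 * \<gamma> / pi) * (1 + t\<^sup>2)"
proof -
  define u where "u = (x - t)\<^sup>2"
  define D where "D = u + \<gamma>\<^sup>2"
  have u: "u \<ge> 0" and g: "\<gamma>\<^sup>2 > 0"
    using assms by (auto simp: u_def)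
  have D0: "D > 0"
    using u g unfolding D_def by linarith
  have D: "u / D \<le> 1" "(1 + 2 * t\<^sup>2) / D \<le> (1 + 2 * t\<^sup>2) / \<gamma>\<^sup>2"
    using u g D0 by (auto simp: D_def intro!: divide_left_mono)
  have "x\<^sup>2 \<le> 2 * u + 2 * t\<^sup>2"
    using zero_le_power2[of "x - 2 * t"] by (simp add: u_def power2_eq_square algebra_simps)
  then have "(1 + x\<^sup>2) * Poisson \<gamma> (x - t) \<le> \<gamma> * (1 + 2 * u + 2 * t\<^sup>2) / (pi * D)"
    using assms D0 by (simp add: Poisson_def u_def D_def divide_right_mono)
  also have "\<dots> = (\<gamma> / pi) * ((1 + 2 * t\<^sup>2) / D + 2 * (u / D))"
    using D0 by (simp add: field_simps)
  also have "\<dots> \<le> (\<gamma> / pi) * ((1 + 2 * t\<^sup>2) / \<gamma>\<^sup>2 + 2)"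
    using assms D by (intro mult_left_mono add_mono) auto
  also have "\<dots> = (1 + 2 * t\<^sup>2) / (pi * \<gamma>) + 2 * \<gamma> / pi"
    using assms by (simp add: field_simps power2_eq_square)
  also have "\<dots> \<le> (2 / (pi * \<gamma>) + 2 * \<gamma> / pi) * (1 + t\<^sup>2)"
    using assms by (simp add: field_simps)
  finally show ?thesis .
qed

lemma Poisson_continuous_on: "\<gamma> > 0 \<Longrightarrow> continuous_on UNIV (Poisson \<gamma>)"
  unfolding Poisson_def by (intro continuous_intros) (simp add: add_nonneg_pos)

lemma Poisson_borel_measurable [measurable]: "Poisson \<gamma> \<in> borel_measurable borel"
  unfolding Poisson_def by measurable

section \<open>Poisson integrals of Borel probability measures\<close>

lemma borel_prob_prob_space: "borel_prob \<mu> \<Longrightarrow> prob_space \<mu>"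
  by (simp add: borel_prob_def)

lemma borel_prob_measurable:
  "borel_prob \<mu> \<Longrightarrow> f \<in> borel_measurable borel \<Longrightarrow> f \<in> borel_measurable \<mu>"
  unfolding borel_prob_def using measurable_cong_sets by blast

lemma borel_prob_integrable_bounded:
  fixes f :: "real \<Rightarrow> 'b::{banach, second_countable_topology}"
  assumes "borel_prob \<mu>" "f \<in> borel_measurable borel" "\<And>x. norm (f x) \<le> c"
  shows "integrable \<mu> f"
proof -
  interpret prob_space \<mu>
    using assms(1) by (rule borel_prob_prob_space)
  show ?thesis
    by (rule integrable_const_bound[where B = c]) (use assms borel_prob_measurable in auto)
qed

lemma supp_within_integrable_power:
  assumes "borel_prob \<mu>" "supp_within \<mu> M"
  shows "integrable \<mu> (\<lambda>x. x ^ k)"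
proof -
  interpret prob_space \<mu>
    using assms(1) by (rule borel_prob_prob_space)
  have "AE x in \<mu>. norm (x ^ k) \<le> M ^ k"
    using assms(2) unfolding supp_within_def
  proof eventually_elim
    case (elim x)
    then have "\<bar>x\<bar> ^ k \<le> M ^ k"
      by (intro power_mono) auto
    then show ?case
      by (simp add: power_abs)
  qed
  moreover have "(\<lambda>x. x ^ k) \<in> borel_measurable \<mu>"
    using assms(1) by (rule borel_prob_measurable) measurable
  ultimately show ?thesis
    by (rule integrable_const_bound)
qed

lemma supp_within_moment_even_le:
  assumes "borel_prob \<mu>" "supp_within \<mu> M"
  shows "moment (2 * j) \<mu> \<le> M ^ (2 * j)"
proof -
  interpret prob_space \<mu>
    using assms(1) by (rule borel_prob_prob_space)
  have "AE x in \<mu>. x ^ (2 * j) \<le> M ^ (2 * j)"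
    using assms(2) unfolding supp_within_def
  proof eventually_elim
    case (elim x)
    then have "\<bar>x\<bar> ^ (2 * j) \<le> M ^ (2 * j)"
      by (intro power_mono) auto
    then show ?case
      by (simp add: power_mult power_even_abs)
  qed
  then have "(\<integral>x. x ^ (2 * j) \<partial>\<mu>) \<le> (\<integral>x. M ^ (2 * j) \<partial>\<mu>)"
    using supp_within_integrable_power[OF assms] by (intro integral_mono_AE) auto
  then show ?thesis
    by (simp add: moment_def prob_space)
qed

lemma return_in_B: "M \<ge> 0 \<Longrightarrow> return borel 0 \<in> B M"
  unfolding B_def borel_prob_def supp_within_def
  by (auto intro!: prob_space_return simp: AE_return)

lemma integrable_Poisson_shift:
  "borel_prob \<nu> \<Longrightarrow> \<gamma> > 0 \<Longrightarrow> integrable \<nu> (\<lambda>t. Poisson \<gamma> (x - t))"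
  by (rule borel_prob_integrable_bounded[where c = "1 / (pi * \<gamma>)"])
     (measurable, simp add: Poisson_le abs_of_pos Poisson_pos)

lemma Poisson_conv_nonneg: "borel_prob \<nu> \<Longrightarrow> \<gamma> > 0 \<Longrightarrow> 0 \<le> Poisson_conv \<gamma> \<nu> x"
  unfolding Poisson_conv_def using Poisson_pos by (intro integral_nonneg_AE) (auto intro: less_imp_le)

lemma Poisson_conv_le:
  assumes "borel_prob \<nu>" "\<gamma> > 0"
  shows "Poisson_conv \<gamma> \<nu> x \<le> 1 / (pi * \<gamma>)"
proof -
  interpret prob_space \<nu>
    using assms(1) by (rule borel_prob_prob_space)
  have "Poisson_conv \<gamma> \<nu> x \<le> (\<integral>t. 1 / (pi * \<gamma>) \<partial>\<nu>)"
    unfolding Poisson_conv_def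
    using assms by (intro integral_mono integrable_Poisson_shift Poisson_le) auto
  then show ?thesis
    by (simp add: prob_space)
qed

lemma Poisson_conv_ge:
  assumes "borel_prob \<nu>" "\<gamma> > 0" "supp_within \<nu> M"
  shows "\<gamma> / (pi * ((\<bar>x\<bar> + M)\<^sup>2 + \<gamma>\<^sup>2)) \<le> Poisson_conv \<gamma> \<nu> x"
proof -
  interpret prob_space \<nu>
    using assms(1) by (rule borel_prob_prob_space)
  have "AE t in \<nu>. \<gamma> / (pi * ((\<bar>x\<bar> + M)\<^sup>2 + \<gamma>\<^sup>2)) \<le> Poisson \<gamma> (x - t)"
    using assms(3) unfolding supp_within_def
    by eventually_elim (rule Poisson_ge[OF assms(2)], auto)
  then have "(\<integral>t. \<gamma> / (pi * ((\<bar>x\<bar> + M)\<^sup>2 + \<gamma>\<^sup>2)) \<partial>\<nu>) \<le> Poisson_conv \<gamma> \<nu> x"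
    unfolding Poisson_conv_def
    using assms by (intro integral_mono_AE integrable_Poisson_shift) auto
  then show ?thesis
    by (simp add: prob_space)
qed

lemma Poisson_conv_le_moment2:
  assumes "borel_prob \<nu>" "\<gamma> > 0" "integrable \<nu> (\<lambda>t. t\<^sup>2)"
  shows "Poisson_conv \<gamma> \<nu> x \<le> (2 / (pi * \<gamma>) + 2 * \<gamma> / pi) * (1 + moment 2 \<nu>) / (1 + x\<^sup>2)"
proof -
  interpret prob_space \<nu>
    using assms(1) by (rule borel_prob_prob_space)
  have "(1 + x\<^sup>2) * Poisson_conv \<gamma> \<nu> x = (\<integral>t. (1 + x\<^sup>2) * Poisson \<gamma> (x - t) \<partial>\<nu>)"
    unfolding Poisson_conv_def by (rule integral_mult_right_zero[symmetric])
  also have "\<dots> \<le> (\<integral>t. (2 / (pi * \<gamma>) + 2 * \<gamma> / pi) * (1 + t\<^sup>2) \<partial>\<nu>)"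
    using assms by (intro integral_mono Poisson_shift_tail integrable_mult_right integrable_Poisson_shift) auto
  also have "\<dots> = (2 / (pi * \<gamma>) + 2 * \<gamma> / pi) * (1 + moment 2 \<nu>)"
    using assms(3) by (simp add: moment_def prob_space)
  finally show ?thesis
    by (simp add: field_simps add_pos_nonneg)
qed

lemma Poisson_conv_borel_measurable:
  assumes "borel_prob \<nu>"
  shows "Poisson_conv \<gamma> \<nu> \<in> borel_measurable borel"
proof -
  interpret prob_space \<nu>
    using assms by (rule borel_prob_prob_space)
  have "(\<lambda>(x, t). Poisson \<gamma> (x - t)) \<in> borel_measurable (borel \<Otimes>\<^sub>M borel)"
    by measurable
  moreover have "sets (borel \<Otimes>\<^sub>M \<nu>) = sets (borel \<Otimes>\<^sub>M borel)"
    using assms by (intro sets_pair_measure_cong) (auto simp: borel_prob_def)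
  ultimately have "(\<lambda>(x, t). Poisson \<gamma> (x - t)) \<in> borel_measurable (borel \<Otimes>\<^sub>M \<nu>)"
    using measurable_cong_sets by blast
  then show ?thesis
    unfolding Poisson_conv_def by (rule borel_measurable_lebesgue_integral)
qed

lemma Im_Stieltjes:
  assumes "borel_prob \<mu>" "\<gamma> > 0"
  shows "Im (Stieltjes \<mu> (Complex x \<gamma>)) = - pi * Poisson_conv \<gamma> \<mu> x"
proof -
  have bound: "norm (1 / (Complex x \<gamma> - t)) \<le> 1 / \<gamma>" for t :: real
  proof -
    have "\<gamma> \<le> norm (Complex x \<gamma> - t)"
      using abs_Im_le_cmod[of "Complex x \<gamma> - t"] assms(2) by simp
    then have "1 / norm (Complex x \<gamma> - t) \<le> 1 / \<gamma>"
      using assms(2) by (intro divide_left_mono) (auto intro!: mult_pos_pos)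
    then show ?thesis
      by (simp add: norm_divide)
  qed
  have "integrable \<mu> (\<lambda>t. 1 / (Complex x \<gamma> - t))"
    by (rule borel_prob_integrable_bounded[OF assms(1) _ bound]) measurable
  then have "Im (Stieltjes \<mu> (Complex x \<gamma>)) = (\<integral>t. Im (1 / (Complex x \<gamma> - t)) \<partial>\<mu>)"
    by (simp add: Stieltjes_def)
  also have "\<dots> = (\<integral>t. - pi * Poisson \<gamma> (x - t) \<partial>\<mu>)"
    by (simp add: Poisson_def Im_divide power2_eq_square)
  finally show ?thesis
    by (simp add: Poisson_conv_def)
qed

lemma ell_eq: "borel_prob \<mu> \<Longrightarrow> \<gamma> > 0 \<Longrightarrow> ell \<gamma> x \<mu> = - ln (Poisson_conv \<gamma> \<mu> x)"
  by (simp add: ell_def Im_Stieltjes)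

section \<open>A logarithmic majorant of the loss\<close>

definition log_weight :: "real \<Rightarrow> real \<Rightarrow> real" where
  "log_weight c x = c + 2 * ln (1 + \<bar>x\<bar>)"

definition ell_const :: "real \<Rightarrow> real \<Rightarrow> real" where
  "ell_const \<gamma> M = \<bar>ln (pi * \<gamma>)\<bar> + \<bar>ln (pi / \<gamma>)\<bar> + \<bar>ln ((M + 1)\<^sup>2 + \<gamma>\<^sup>2)\<bar>"

lemma log_weight_nonneg: "c \<ge> 0 \<Longrightarrow> 0 \<le> log_weight c x"
  by (simp add: log_weight_def)

lemma ell_borel_measurable:
  "borel_prob \<mu> \<Longrightarrow> \<gamma> > 0 \<Longrightarrow> (\<lambda>x. ell \<gamma> x \<mu>) \<in> borel_measurable borel"
proof -
  assume "borel_prob \<mu>" "\<gamma> > 0"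
  moreover have "(\<lambda>x. - ln (Poisson_conv \<gamma> \<mu> x)) \<in> borel_measurable borel"
    using Poisson_conv_borel_measurable[OF \<open>borel_prob \<mu>\<close>] by measurable
  ultimately show ?thesis
    by (simp add: ell_eq)
qed

lemma abs_ell_le:
  assumes "\<mu> \<in> B M" "\<gamma> > 0" "M \<ge> 0"
  shows "\<bar>ell \<gamma> x \<mu>\<bar> \<le> log_weight (ell_const \<gamma> M) x"
proof -
  have \<mu>: "borel_prob \<mu>" "supp_within \<mu> M"
    using assms(1) by (auto simp: B_def)
  define p where "p = Poisson_conv \<gamma> \<mu> x"
  define D where "D = (\<bar>x\<bar> + M)\<^sup>2 + \<gamma>\<^sup>2"
  define K where "K = (M + 1)\<^sup>2 + \<gamma>\<^sup>2"
  have D: "D > 0" and K: "K > 0"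
    using assms(2) by (auto simp: D_def K_def add_nonneg_pos)
  have lower: "0 < \<gamma> / (pi * D)"
    using D assms(2) by simp
  have p_ge: "\<gamma> / (pi * D) \<le> p" and p_le: "p \<le> 1 / (pi * \<gamma>)"
    using Poisson_conv_ge[OF \<mu>(1) assms(2) \<mu>(2)] Poisson_conv_le[OF \<mu>(1) assms(2)]
    by (auto simp: p_def D_def)
  have p: "p > 0"
    using lower p_ge by linarith
  have ell: "ell \<gamma> x \<mu> = - ln p"
    using ell_eq[OF \<mu>(1) assms(2)] by (simp add: p_def)
  have "ln D \<le> ln K + 2 * ln (1 + \<bar>x\<bar>)"
  proof -
    have "\<bar>x\<bar> + M \<le> (M + 1) * (1 + \<bar>x\<bar>)"
      using assms(3) by (simp add: algebra_simps)
    then have "(\<bar>x\<bar> + M)\<^sup>2 \<le> (M + 1)\<^sup>2 * (1 + \<bar>x\<bar>)\<^sup>2"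
      using assms(3) by (metis power_mono power_mult_distrib abs_ge_zero add_nonneg_nonneg)
    moreover have "\<gamma>\<^sup>2 \<le> \<gamma>\<^sup>2 * (1 + \<bar>x\<bar>)\<^sup>2"
      using mult_left_mono[of 1 "(1 + \<bar>x\<bar>)\<^sup>2" "\<gamma>\<^sup>2"] by (simp add: one_le_power)
    ultimately have "D \<le> K * (1 + \<bar>x\<bar>)\<^sup>2"
      unfolding D_def K_def by (simp only: distrib_right)
    then have "ln D \<le> ln (K * (1 + \<bar>x\<bar>)\<^sup>2)"
      using D by simp
    also have "\<dots> = ln K + 2 * ln (1 + \<bar>x\<bar>)"
      using K by (simp add: ln_mult ln_realpow)
    finally show ?thesis .
  qed
  moreover have "ln (\<gamma> / (pi * D)) \<le> ln p"
    using lower p_ge by simp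
  moreover have "ln (\<gamma> / (pi * D)) = ln \<gamma> - ln pi - ln D"
    using D assms(2) by (simp add: ln_div ln_mult)
  moreover have "ln (pi / \<gamma>) = ln pi - ln \<gamma>"
    using assms(2) by (simp add: ln_div)
  moreover have "ln p \<le> ln (1 / (pi * \<gamma>))"
    using p_le p by (rule ln_mono)
  moreover have "ln (1 / (pi * \<gamma>)) = - ln (pi * \<gamma>)"
    using assms(2) by (simp add: ln_div)
  moreover have "0 \<le> ln (1 + \<bar>x\<bar>)"
    by simp
  ultimately show ?thesis
    unfolding ell log_weight_def ell_const_def K_def[symmetric] by linarith
qed

lemma integrable_ln_over_square_nonneg:
  fixes c :: real
  assumes "c \<ge> 0"
  shows "integrable lborel (\<lambda>y. (c + 2 * ln (1 + y)) / (1 + y)\<^sup>2 * indicator {0..} y)"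
proof -
  define f where "f y = (c + 2 * ln (1 + y)) / (1 + y)\<^sup>2" for y :: real
  define F where "F y = - (c + 2 + 2 * ln (1 + y)) / (1 + y)" for y :: real
  have f_meas: "f \<in> borel_measurable borel"
    unfolding f_def by measurable
  have f_nonneg: "0 \<le> f y" if "0 \<le> y" for y
    using assms that by (simp add: f_def)
  have F_deriv: "DERIV F y :> f y" if "0 \<le> y" for y
  proof -
    have "DERIV F y :> - (2 * (1 / (1 + y)) * (1 + y) - (c + 2 + 2 * ln (1 + y))) / (1 + y)\<^sup>2"
      unfolding F_def using that by (auto intro!: derivative_eq_intros simp: power2_eq_square)
    moreover have "2 * (1 / (1 + y)) * (1 + y) = 2"
      using that by (simp add: field_simps)
    ultimately show ?thesis
      by (simp add: f_def algebra_simps)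
  qed
  have F_lim: "(F \<longlongrightarrow> 0) at_top"
  proof -
    have shift: "filterlim (\<lambda>y::real. 1 + y) at_top at_top"
      by (rule filterlim_tendsto_add_at_top[OF tendsto_const filterlim_ident])
    have "((\<lambda>y. - (c + 2) * (1 / (1 + y)) - 2 * (ln (1 + y) / (1 + y))) \<longlongrightarrow> - (c + 2) * 0 - 2 * 0) at_top"
      by (intro tendsto_intros filterlim_compose[OF ln_x_over_x_tendsto_0 shift]
          tendsto_divide_0[OF tendsto_const filterlim_at_top_imp_at_infinity[OF shift]])
    moreover have "F = (\<lambda>y. - (c + 2) * (1 / (1 + y)) - 2 * (ln (1 + y) / (1 + y)))"
      by (auto simp: F_def add_divide_distrib diff_divide_distrib minus_divide_left[symmetric] algebra_simps)
    ultimately show ?thesis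
      by simp
  qed
  have "(\<integral>\<^sup>+y. ennreal (f y) * indicator {0..} y \<partial>lborel) = ennreal (0 - F 0)"
    by (rule nn_integral_FTC_atLeast[OF f_meas F_deriv f_nonneg F_lim])
  moreover have "(\<lambda>y. ennreal (f y * indicator {0..} y)) = (\<lambda>y. ennreal (f y) * indicator {0..} y)"
    by (auto simp: indicator_def)
  ultimately have finite: "(\<integral>\<^sup>+y. ennreal (f y * indicator {0..} y) \<partial>lborel) < \<infinity>"
    by simp
  have "(\<lambda>y. f y * indicator {0..} y) \<in> borel_measurable lborel"
    unfolding f_def by measurable
  moreover have "AE y in lborel. 0 \<le> f y * indicator {0..} y"
    using f_nonneg by (intro AE_I2) (simp add: indicator_def)
  ultimately show ?thesis
    unfolding f_def[symmetric] using finite by (rule integrableI_nonneg)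
qed

lemma integrable_log_weight_over_square:
  assumes "c \<ge> 0"
  shows "integrable lborel (\<lambda>x. log_weight c x / (1 + x\<^sup>2))"
proof -
  define g where "g y = (c + 2 * ln (1 + y)) / (1 + y)\<^sup>2 * indicator {0..} y" for y :: real
  have g: "integrable lborel g"
    unfolding g_def by (rule integrable_ln_over_square_nonneg[OF assms])
  then have "integrable lborel (\<lambda>x. g (- x))"
    using lborel_integrable_real_affine_iff[of "-1" g 0] by simp
  with g have dom: "integrable lborel (\<lambda>x. 2 * (g x + g (- x)))"
    by simp
  have g_nonneg: "0 \<le> g y" for y
    using assms by (simp add: g_def indicator_def)
  have "norm (log_weight c x / (1 + x\<^sup>2)) \<le> norm (2 * (g x + g (- x)))" for x
  proof -
    have "(1 + \<bar>x\<bar>)\<^sup>2 \<le> 2 * (1 + x\<^sup>2)"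
      using zero_le_power2[of "\<bar>x\<bar> - 1"] by (simp add: power2_eq_square algebra_simps)
    then have "log_weight c x / (1 + x\<^sup>2) \<le> log_weight c x / ((1 + \<bar>x\<bar>)\<^sup>2 / 2)"
      using log_weight_nonneg[OF assms] by (intro divide_left_mono) (auto simp: add_pos_nonneg)
    also have "\<dots> = 2 * g \<bar>x\<bar>"
      by (simp add: g_def log_weight_def)
    also have "g \<bar>x\<bar> \<le> g x + g (- x)"
      using g_nonneg[of x] g_nonneg[of "- x"] by (cases "x \<ge> 0") auto
    finally show ?thesis
      using log_weight_nonneg[OF assms, of x] g_nonneg[of x] g_nonneg[of "- x"] by simp
  qed
  moreover have "(\<lambda>x. log_weight c x / (1 + x\<^sup>2)) \<in> borel_measurable lborel"
    unfolding log_weight_def by measurable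
  ultimately show ?thesis
    by (intro Bochner_Integration.integrable_bound[OF dom] AE_I2)
qed

section \<open>Bounded continuous integrands under moment convergence\<close>

lemma polynomial_approx_tail_bound:
  fixes h :: "real \<Rightarrow> real"
  assumes "R \<ge> 1" "n \<le> 2 * j" "\<And>t. \<bar>h t\<bar> \<le> c"
    and "\<And>t. \<bar>t\<bar> \<le> R \<Longrightarrow> \<bar>h t - (\<Sum>i\<le>n. a i * t ^ i)\<bar> \<le> e"
  shows "\<bar>h t - (\<Sum>i\<le>n. a i * t ^ i)\<bar> \<le> e + (c + (\<Sum>i\<le>n. \<bar>a i\<bar> * R ^ i)) * (t / R) ^ (2 * j)"
proof (cases "\<bar>t\<bar> \<le> R")
  case True
  have "0 \<le> c" "0 \<le> (\<Sum>i\<le>n. \<bar>a i\<bar> * R ^ i)" "0 \<le> (t / R) ^ (2 * j)"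
    using assms(1) assms(3)[of 0] by (auto simp: power_mult intro!: sum_nonneg)
  then show ?thesis
    using assms(4)[OF True] mult_nonneg_nonneg by (smt (verit))
next
  case False
  define r where "r = \<bar>t\<bar> / R"
  have r: "1 \<le> r" "\<bar>t\<bar> = R * r"
    using False assms(1) by (auto simp: r_def)
  have "\<bar>t / R\<bar> = r"
    using assms(1) by (simp add: r_def abs_divide)
  then have q: "(t / R) ^ (2 * j) = r ^ (2 * j)"
    using power_even_abs[of "2 * j" "t / R"] by simp
  have "\<bar>t\<bar> ^ i \<le> R ^ i * r ^ (2 * j)" if "i \<le> n" for i
  proof -
    have "r ^ i \<le> r ^ (2 * j)"
      using r(1) that assms(2) by (intro power_increasing) auto
    then show ?thesis
      using assms(1) by (simp add: r(2) power_mult_distrib)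
  qed
  then have "\<bar>\<Sum>i\<le>n. a i * t ^ i\<bar> \<le> (\<Sum>i\<le>n. \<bar>a i\<bar> * (R ^ i * r ^ (2 * j)))"
    by (intro order_trans[OF sum_abs] sum_mono) (simp add: abs_mult power_abs mult_left_mono)
  also have "\<dots> = (\<Sum>i\<le>n. \<bar>a i\<bar> * R ^ i) * r ^ (2 * j)"
    by (simp add: sum_distrib_right mult.assoc)
  finally have "\<bar>\<Sum>i\<le>n. a i * t ^ i\<bar> \<le> (\<Sum>i\<le>n. \<bar>a i\<bar> * R ^ i) * r ^ (2 * j)" .
  moreover have "\<bar>h t\<bar> \<le> c * r ^ (2 * j)"
    using assms(3)[of t] assms(3)[of 0] mult_left_mono[OF one_le_power[OF r(1)], of c "2 * j"] by linarith
  moreover have "0 \<le> e"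
    using assms(1) assms(4)[of 0] by (smt (verit) abs_ge_zero abs_zero)
  ultimately show ?thesis
    unfolding q by (simp add: distrib_right)
qed

lemma abs_integral_diff_le_moment:
  fixes h g :: "real \<Rightarrow> real"
  assumes "borel_prob \<mu>" "integrable \<mu> h" "integrable \<mu> g" "integrable \<mu> (\<lambda>t. t ^ (2 * j))"
    and "\<And>t. \<bar>h t - g t\<bar> \<le> e + C * (t / R) ^ (2 * j)"
  shows "\<bar>integral\<^sup>L \<mu> h - integral\<^sup>L \<mu> g\<bar> \<le> e + C * (moment (2 * j) \<mu> / R ^ (2 * j))"
proof -
  interpret prob_space \<mu>
    using assms(1) by (rule borel_prob_prob_space)
  have "\<bar>\<integral>t. h t - g t \<partial>\<mu>\<bar> \<le> (\<integral>t. e + C * (t ^ (2 * j) / R ^ (2 * j)) \<partial>\<mu>)"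
    using assms by (intro integral_abs_bound_integral) (auto simp: power_divide)
  also have "\<dots> = e + C * (moment (2 * j) \<mu> / R ^ (2 * j))"
    using assms(4) by (simp add: moment_def prob_space)
  finally show ?thesis
    using assms(2,3) by simp
qed

lemma abs_integral_diff_le_supp_within:
  fixes h g :: "real \<Rightarrow> real"
  assumes "borel_prob \<mu>" "supp_within \<mu> R" "integrable \<mu> h" "integrable \<mu> g"
    and "\<And>t. \<bar>t\<bar> \<le> R \<Longrightarrow> \<bar>h t - g t\<bar> \<le> e"
  shows "\<bar>integral\<^sup>L \<mu> h - integral\<^sup>L \<mu> g\<bar> \<le> e"
proof -
  interpret prob_space \<mu>
    using assms(1) by (rule borel_prob_prob_space)
  have "AE t in \<mu>. \<bar>h t - g t\<bar> \<le> e"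
    using assms(2) unfolding supp_within_def by eventually_elim (use assms(5) in auto)
  then have "\<bar>\<integral>t. h t - g t \<partial>\<mu>\<bar> \<le> (\<integral>t. e \<partial>\<mu>)"
    using assms(3,4) by (intro integral_abs_bound_integral[THEN order_trans] integral_mono_AE) auto
  then show ?thesis
    using assms(3,4) by (simp add: prob_space)
qed

lemma exists_even_power_ratio_lt:
  fixes C M R e :: real
  assumes "0 \<le> M" "M < R" "1 < R" "0 < e"
  obtains j where "n \<le> 2 * j" "C * ((M ^ (2 * j) + 1) / R ^ (2 * j)) < e"
proof -
  have base: "0 \<le> (M / R)\<^sup>2" "(M / R)\<^sup>2 < 1" "0 \<le> (1 / R)\<^sup>2" "(1 / R)\<^sup>2 < 1"
    using assms by (auto intro!: power_less_one_iff[THEN iffD2])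
  have "(\<lambda>j. C * (((M / R)\<^sup>2) ^ j + ((1 / R)\<^sup>2) ^ j)) \<longlonglongrightarrow> C * (0 + 0)"
    by (intro tendsto_intros LIMSEQ_realpow_zero base)
  moreover have "C * (((M / R)\<^sup>2) ^ j + ((1 / R)\<^sup>2) ^ j) = C * ((M ^ (2 * j) + 1) / R ^ (2 * j))" for j
    by (simp add: power_mult power_divide add_divide_distrib)
  ultimately have "(\<lambda>j. C * ((M ^ (2 * j) + 1) / R ^ (2 * j))) \<longlonglongrightarrow> 0"
    by simp
  then have "\<forall>\<^sub>F j in sequentially. n \<le> j \<and> C * ((M ^ (2 * j) + 1) / R ^ (2 * j)) < e"
    using assms(4) by (intro eventually_conj eventually_ge_at_top order_tendstoD(2))
  then obtain j where "n \<le> j" "C * ((M ^ (2 * j) + 1) / R ^ (2 * j)) < e"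
    unfolding eventually_sequentially by blast
  then show ?thesis
    using that[of j] by simp
qed

lemma tendsto_integral_diff_of_moments:
  fixes \<nu> \<nu>' :: "nat \<Rightarrow> real measure" and h :: "real \<Rightarrow> real"
  assumes \<nu>: "\<And>d. borel_prob (\<nu> d)" "\<And>d k. integrable (\<nu> d) (\<lambda>x. x ^ k)"
    and \<nu>': "\<And>d. borel_prob (\<nu>' d)" "M' > 0" "\<And>d. supp_within (\<nu>' d) M'"
    and moments: "\<And>k. (\<lambda>d. moment k (\<nu> d) - moment k (\<nu>' d)) \<longlonglongrightarrow> 0"
    and h: "continuous_on UNIV h" "\<And>t. \<bar>h t\<bar> \<le> c"
  shows "(\<lambda>d. integral\<^sup>L (\<nu> d) h - integral\<^sup>L (\<nu>' d) h) \<longlonglongrightarrow> 0"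
proof (rule tendstoI)
  fix r :: real
  assume "r > 0"
  define e where "e = r / 4"
  define R where "R = M' + 1"
  have e: "e > 0" and R: "1 < R" "M' < R"
    using \<open>r > 0\<close> \<nu>'(2) by (auto simp: e_def R_def)
  obtain g where "real_polynomial_function g" and g: "\<And>t. t \<in> {-R..R} \<Longrightarrow> \<bar>h t - g t\<bar> < e"
    using Stone_Weierstrass_real_polynomial_function[OF compact_Icc continuous_on_subset[OF h(1)] e]
    by blast
  then obtain a n where g_eq: "g = (\<lambda>t. \<Sum>i\<le>n. a i * t ^ i)"
    by (auto simp: real_polynomial_function_iff_sum)
  have approx: "\<bar>h t - g t\<bar> \<le> e" if "\<bar>t\<bar> \<le> R" for t
    using that by (intro less_imp_le g) auto
  define C where "C = c + (\<Sum>i\<le>n. \<bar>a i\<bar> * R ^ i)"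
  have "0 \<le> c"
    using h(2)[of 0] by simp
  then have C: "0 \<le> C"
    using R by (simp add: C_def sum_nonneg)
  obtain j where j: "n \<le> 2 * j" "C * ((M' ^ (2 * j) + 1) / R ^ (2 * j)) < e"
    using exists_even_power_ratio_lt[of M' R e] \<nu>'(2) R e by auto
  have int_g: "integrable (\<nu> d) g" "integrable (\<nu>' d) g" for d
    using \<nu>(2) supp_within_integrable_power[OF \<nu>'(1,3)] by (auto simp: g_eq)
  have "(\<lambda>d. \<Sum>i\<le>n. a i * (moment i (\<nu> d) - moment i (\<nu>' d))) \<longlonglongrightarrow> (\<Sum>i\<le>n. a i * 0)"
    by (intro tendsto_intros moments)
  moreover have "(\<Sum>i\<le>n. a i * (moment i (\<nu> d) - moment i (\<nu>' d)))
      = integral\<^sup>L (\<nu> d) g - integral\<^sup>L (\<nu>' d) g" for d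
    using \<nu>(2) supp_within_integrable_power[OF \<nu>'(1,3)]
    by (simp add: g_eq moment_def sum_subtractf right_diff_distrib)
  ultimately have "(\<lambda>d. integral\<^sup>L (\<nu> d) g - integral\<^sup>L (\<nu>' d) g) \<longlonglongrightarrow> 0"
    by simp
  from tendstoD[OF this e]
  have "\<forall>\<^sub>F d in sequentially. \<bar>integral\<^sup>L (\<nu> d) g - integral\<^sup>L (\<nu>' d) g\<bar> < e"
    by (simp add: dist_real_def)
  moreover have "\<forall>\<^sub>F d in sequentially. moment (2 * j) (\<nu> d) - moment (2 * j) (\<nu>' d) < 1"
    by (rule order_tendstoD(2)[OF moments]) simp
  ultimately show "\<forall>\<^sub>F d in sequentially. dist (integral\<^sup>L (\<nu> d) h - integral\<^sup>L (\<nu>' d) h) 0 < r"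
  proof eventually_elim
    case (elim d)
    have h_meas: "h \<in> borel_measurable borel"
      using h(1) by (rule borel_measurable_continuous_onI)
    have int_h: "integrable (\<nu> d) h" "integrable (\<nu>' d) h"
      using h(2) by (auto intro!: borel_prob_integrable_bounded[OF _ h_meas] \<nu>(1) \<nu>'(1))
    have "moment (2 * j) (\<nu> d) \<le> M' ^ (2 * j) + 1"
      using elim(2) supp_within_moment_even_le[OF \<nu>'(1,3), of j d] by linarith
    then have "C * (moment (2 * j) (\<nu> d) / R ^ (2 * j)) \<le> C * ((M' ^ (2 * j) + 1) / R ^ (2 * j))"
      using C R by (intro mult_left_mono divide_right_mono) auto
    moreover have "\<bar>integral\<^sup>L (\<nu> d) h - integral\<^sup>L (\<nu> d) g\<bar> \<le> e + C * (moment (2 * j) (\<nu> d) / R ^ (2 * j))"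
    proof (rule abs_integral_diff_le_moment[OF \<nu>(1) int_h(1) int_g(1) \<nu>(2)])
      show "\<bar>h t - g t\<bar> \<le> e + C * (t / R) ^ (2 * j)" for t
        unfolding C_def g_eq
        by (rule polynomial_approx_tail_bound) (use R j(1) h(2) approx in \<open>auto simp: g_eq\<close>)
    qed
    moreover have "\<bar>integral\<^sup>L (\<nu>' d) h - integral\<^sup>L (\<nu>' d) g\<bar> \<le> e"
      using R approx by (intro abs_integral_diff_le_supp_within[OF \<nu>'(1,3) int_h(2) int_g(2)]) auto
    ultimately have "\<bar>integral\<^sup>L (\<nu> d) h - integral\<^sup>L (\<nu>' d) h\<bar> < 4 * e"
      using elim(1) j(2) by linarith
    then show ?case
      by (simp add: dist_real_def e_def)
  qed
qed

section \<open>Uniform control of the difference of H\<close>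

lemma log_weight_Poisson_conv_le:
  assumes "c \<ge> 0" "borel_prob \<nu>" "\<gamma> > 0" "integrable \<nu> (\<lambda>t. t\<^sup>2)" "moment 2 \<nu> \<le> m"
  shows "log_weight c x * Poisson_conv \<gamma> \<nu> x
    \<le> (2 / (pi * \<gamma>) + 2 * \<gamma> / pi) * (1 + m) * (log_weight c x / (1 + x\<^sup>2))"
proof -
  have "Poisson_conv \<gamma> \<nu> x \<le> (2 / (pi * \<gamma>) + 2 * \<gamma> / pi) * (1 + moment 2 \<nu>) / (1 + x\<^sup>2)"
    by (rule Poisson_conv_le_moment2[OF assms(2-4)])
  also have "\<dots> \<le> (2 / (pi * \<gamma>) + 2 * \<gamma> / pi) * (1 + m) / (1 + x\<^sup>2)"
    using assms(3,5) by (intro divide_right_mono mult_left_mono) auto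
  finally have "log_weight c x * Poisson_conv \<gamma> \<nu> x
      \<le> log_weight c x * ((2 / (pi * \<gamma>) + 2 * \<gamma> / pi) * (1 + m) / (1 + x\<^sup>2))"
    using log_weight_nonneg[OF assms(1)] by (rule mult_left_mono)
  then show ?thesis
    by (simp add: mult_ac)
qed

lemma log_weight_Poisson_conv_borel_measurable:
  "borel_prob \<nu> \<Longrightarrow> (\<lambda>x. log_weight c x * Poisson_conv \<gamma> \<nu> x) \<in> borel_measurable lborel"
  using Poisson_conv_borel_measurable[of \<nu> \<gamma>] unfolding log_weight_def by measurable

lemma integrable_log_weight_Poisson_conv:
  assumes "c \<ge> 0" "borel_prob \<nu>" "\<gamma> > 0" "integrable \<nu> (\<lambda>t. t\<^sup>2)"
  shows "integrable lborel (\<lambda>x. log_weight c x * Poisson_conv \<gamma> \<nu> x)"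
proof (rule Bochner_Integration.integrable_bound)
  show "integrable lborel
      (\<lambda>x. (2 / (pi * \<gamma>) + 2 * \<gamma> / pi) * (1 + moment 2 \<nu>) * (log_weight c x / (1 + x\<^sup>2)))"
    by (intro integrable_mult_right integrable_log_weight_over_square assms(1))
  show "(\<lambda>x. log_weight c x * Poisson_conv \<gamma> \<nu> x) \<in> borel_measurable lborel"
    using assms(2) by (rule log_weight_Poisson_conv_borel_measurable)
  show "AE x in lborel. norm (log_weight c x * Poisson_conv \<gamma> \<nu> x)
      \<le> norm ((2 / (pi * \<gamma>) + 2 * \<gamma> / pi) * (1 + moment 2 \<nu>) * (log_weight c x / (1 + x\<^sup>2)))"
  proof (rule AE_I2)
    fix x
    have "0 \<le> log_weight c x * Poisson_conv \<gamma> \<nu> x"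
      using log_weight_nonneg[OF assms(1)] Poisson_conv_nonneg[OF assms(2,3)] by simp
    then have "norm (log_weight c x * Poisson_conv \<gamma> \<nu> x) = log_weight c x * Poisson_conv \<gamma> \<nu> x"
      by simp
    also have "\<dots> \<le> (2 / (pi * \<gamma>) + 2 * \<gamma> / pi) * (1 + moment 2 \<nu>) * (log_weight c x / (1 + x\<^sup>2))"
      by (rule log_weight_Poisson_conv_le[OF assms order_refl])
    also have "\<dots> \<le> norm ((2 / (pi * \<gamma>) + 2 * \<gamma> / pi) * (1 + moment 2 \<nu>) * (log_weight c x / (1 + x\<^sup>2)))"
      by (metis abs_ge_self real_norm_def)
    finally show "norm (log_weight c x * Poisson_conv \<gamma> \<nu> x)
        \<le> norm ((2 / (pi * \<gamma>) + 2 * \<gamma> / pi) * (1 + moment 2 \<nu>) * (log_weight c x / (1 + x\<^sup>2)))" .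
  qed
qed

lemma abs_H_diff_le:
  assumes \<mu>: "\<mu> \<in> B M" "\<gamma> > 0" "M \<ge> 0"
    and \<nu>: "borel_prob \<nu>" "integrable \<nu> (\<lambda>t. t\<^sup>2)" "borel_prob \<nu>'" "integrable \<nu>' (\<lambda>t. t\<^sup>2)"
  shows "\<bar>H \<gamma> \<nu> \<mu> - H \<gamma> \<nu>' \<mu>\<bar>
    \<le> (\<integral>x. log_weight (ell_const \<gamma> M) x * \<bar>Poisson_conv \<gamma> \<nu> x - Poisson_conv \<gamma> \<nu>' x\<bar> \<partial>lborel)"
proof -
  define w where "w = log_weight (ell_const \<gamma> M)"
  have "ell_const \<gamma> M \<ge> 0"
    by (simp add: ell_const_def)
  note w_nonneg = log_weight_nonneg[OF this, folded w_def]
  have ell_le: "\<bar>ell \<gamma> x \<mu>\<bar> \<le> w x" for x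
    unfolding w_def by (rule abs_ell_le[OF \<mu>])
  have ell_meas: "(\<lambda>x. ell \<gamma> x \<mu>) \<in> borel_measurable lborel"
    using \<mu>(1) ell_borel_measurable[OF _ \<mu>(2)] by (simp add: B_def)
  have int_ell: "integrable lborel (\<lambda>x. ell \<gamma> x \<mu> * Poisson_conv \<gamma> \<rho> x)"
    if \<rho>: "borel_prob \<rho>" "integrable \<rho> (\<lambda>t. t\<^sup>2)" for \<rho>
  proof (rule Bochner_Integration.integrable_bound)
    show "integrable lborel (\<lambda>x. w x * Poisson_conv \<gamma> \<rho> x)"
      unfolding w_def using \<open>ell_const \<gamma> M \<ge> 0\<close> \<rho>(1) \<mu>(2) \<rho>(2)
      by (rule integrable_log_weight_Poisson_conv)
    show "(\<lambda>x. ell \<gamma> x \<mu> * Poisson_conv \<gamma> \<rho> x) \<in> borel_measurable lborel"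
      using ell_meas Poisson_conv_borel_measurable[OF \<rho>(1)] by measurable
    show "AE x in lborel. norm (ell \<gamma> x \<mu> * Poisson_conv \<gamma> \<rho> x) \<le> norm (w x * Poisson_conv \<gamma> \<rho> x)"
      using ell_le Poisson_conv_nonneg[OF \<rho>(1) \<mu>(2)] w_nonneg
      by (intro AE_I2) (simp add: abs_mult mult_right_mono)
  qed
  have int_diff: "integrable lborel (\<lambda>x. w x * \<bar>Poisson_conv \<gamma> \<nu> x - Poisson_conv \<gamma> \<nu>' x\<bar>)"
  proof (rule Bochner_Integration.integrable_bound)
    show "integrable lborel (\<lambda>x. w x * Poisson_conv \<gamma> \<nu> x + w x * Poisson_conv \<gamma> \<nu>' x)"
      unfolding w_def using \<open>ell_const \<gamma> M \<ge> 0\<close> \<nu> \<mu>(2)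
      by (intro Bochner_Integration.integrable_add integrable_log_weight_Poisson_conv)
    show "(\<lambda>x. w x * \<bar>Poisson_conv \<gamma> \<nu> x - Poisson_conv \<gamma> \<nu>' x\<bar>) \<in> borel_measurable lborel"
      using Poisson_conv_borel_measurable[OF \<nu>(1)] Poisson_conv_borel_measurable[OF \<nu>(3)]
      unfolding w_def log_weight_def by measurable
    show "AE x in lborel. norm (w x * \<bar>Poisson_conv \<gamma> \<nu> x - Poisson_conv \<gamma> \<nu>' x\<bar>)
        \<le> norm (w x * Poisson_conv \<gamma> \<nu> x + w x * Poisson_conv \<gamma> \<nu>' x)"
    proof (rule AE_I2)
      fix x
      have P: "0 \<le> Poisson_conv \<gamma> \<nu> x" "0 \<le> Poisson_conv \<gamma> \<nu>' x"
        using Poisson_conv_nonneg[OF \<nu>(1) \<mu>(2)] Poisson_conv_nonneg[OF \<nu>(3) \<mu>(2)] by auto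
      then have "\<bar>Poisson_conv \<gamma> \<nu> x - Poisson_conv \<gamma> \<nu>' x\<bar> \<le> Poisson_conv \<gamma> \<nu> x + Poisson_conv \<gamma> \<nu>' x"
        by (simp add: abs_le_iff)
      then have "w x * \<bar>Poisson_conv \<gamma> \<nu> x - Poisson_conv \<gamma> \<nu>' x\<bar>
          \<le> w x * Poisson_conv \<gamma> \<nu> x + w x * Poisson_conv \<gamma> \<nu>' x"
        using w_nonneg[of x] by (simp add: mult_left_mono flip: distrib_left)
      then show "norm (w x * \<bar>Poisson_conv \<gamma> \<nu> x - Poisson_conv \<gamma> \<nu>' x\<bar>)
          \<le> norm (w x * Poisson_conv \<gamma> \<nu> x + w x * Poisson_conv \<gamma> \<nu>' x)"
        using w_nonneg[of x] P by simp
    qed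
  qed
  have "H \<gamma> \<nu> \<mu> - H \<gamma> \<nu>' \<mu>
      = (\<integral>x. ell \<gamma> x \<mu> * (Poisson_conv \<gamma> \<nu> x - Poisson_conv \<gamma> \<nu>' x) \<partial>lborel)"
    using int_ell[OF \<nu>(1,2)] int_ell[OF \<nu>(3,4)] by (simp add: H_def right_diff_distrib)
  also have "\<bar>\<dots>\<bar> \<le> (\<integral>x. w x * \<bar>Poisson_conv \<gamma> \<nu> x - Poisson_conv \<gamma> \<nu>' x\<bar> \<partial>lborel)"
  proof (rule integral_abs_bound_integral[OF _ int_diff])
    show "integrable lborel (\<lambda>x. ell \<gamma> x \<mu> * (Poisson_conv \<gamma> \<nu> x - Poisson_conv \<gamma> \<nu>' x))"
      using int_ell[OF \<nu>(1,2)] int_ell[OF \<nu>(3,4)] by (simp add: right_diff_distrib)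
    show "\<bar>ell \<gamma> x \<mu> * (Poisson_conv \<gamma> \<nu> x - Poisson_conv \<gamma> \<nu>' x)\<bar>
        \<le> w x * \<bar>Poisson_conv \<gamma> \<nu> x - Poisson_conv \<gamma> \<nu>' x\<bar>" for x
      using ell_le[of x] by (simp add: abs_mult mult_right_mono)
  qed
  finally show ?thesis
    by (simp add: w_def)
qed

lemma tendsto_integral_log_weight_Poisson_conv_diff:
  fixes \<nu> \<nu>' :: "nat \<Rightarrow> real measure"
  assumes c: "c \<ge> 0" and "\<gamma> > 0"
    and \<nu>: "\<And>d. borel_prob (\<nu> d)" "\<And>d. integrable (\<nu> d) (\<lambda>t. t\<^sup>2)" "\<And>d. moment 2 (\<nu> d) \<le> m"
    and \<nu>': "\<And>d. borel_prob (\<nu>' d)" "\<And>d. integrable (\<nu>' d) (\<lambda>t. t\<^sup>2)" "\<And>d. moment 2 (\<nu>' d) \<le> m"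
    and lim: "\<And>x. (\<lambda>d. Poisson_conv \<gamma> (\<nu> d) x - Poisson_conv \<gamma> (\<nu>' d) x) \<longlonglongrightarrow> 0"
  shows "(\<lambda>d. \<integral>x. log_weight c x * \<bar>Poisson_conv \<gamma> (\<nu> d) x - Poisson_conv \<gamma> (\<nu>' d) x\<bar> \<partial>lborel)
    \<longlonglongrightarrow> 0"
proof -
  define Q where "Q = (2 / (pi * \<gamma>) + 2 * \<gamma> / pi) * (1 + m)"
  define s where "s d x = log_weight c x * \<bar>Poisson_conv \<gamma> (\<nu> d) x - Poisson_conv \<gamma> (\<nu>' d) x\<bar>"
    for d x
  have s_meas: "s d \<in> borel_measurable lborel" for d
    using Poisson_conv_borel_measurable[OF \<nu>(1)] Poisson_conv_borel_measurable[OF \<nu>'(1)]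
    unfolding s_def log_weight_def by measurable
  have dom: "integrable lborel (\<lambda>x. 2 * Q * (log_weight c x / (1 + x\<^sup>2)))"
    by (intro integrable_mult_right integrable_log_weight_over_square c)
  have s_lim: "AE x in lborel. (\<lambda>d. s d x) \<longlonglongrightarrow> 0"
  proof (rule AE_I2)
    fix x
    show "(\<lambda>d. s d x) \<longlonglongrightarrow> 0"
      using tendsto_mult_left[OF tendsto_rabs[OF lim[of x]], of "log_weight c x"]
      by (simp add: s_def)
  qed
  have s_bound: "AE x in lborel. norm (s d x) \<le> 2 * Q * (log_weight c x / (1 + x\<^sup>2))" for d
  proof (rule AE_I2)
    fix x
    have P: "0 \<le> Poisson_conv \<gamma> (\<nu> d) x" "0 \<le> Poisson_conv \<gamma> (\<nu>' d) x"
      using Poisson_conv_nonneg[OF \<nu>(1) \<open>\<gamma> > 0\<close>] Poisson_conv_nonneg[OF \<nu>'(1) \<open>\<gamma> > 0\<close>] by auto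
    then have "\<bar>Poisson_conv \<gamma> (\<nu> d) x - Poisson_conv \<gamma> (\<nu>' d) x\<bar>
        \<le> Poisson_conv \<gamma> (\<nu> d) x + Poisson_conv \<gamma> (\<nu>' d) x"
      by (simp add: abs_le_iff)
    then have "s d x \<le> log_weight c x * Poisson_conv \<gamma> (\<nu> d) x + log_weight c x * Poisson_conv \<gamma> (\<nu>' d) x"
      using log_weight_nonneg[OF c, of x] unfolding s_def by (simp add: mult_left_mono flip: distrib_left)
    also have "\<dots> \<le> Q * (log_weight c x / (1 + x\<^sup>2)) + Q * (log_weight c x / (1 + x\<^sup>2))"
      unfolding Q_def using \<open>\<gamma> > 0\<close>
      by (intro add_mono log_weight_Poisson_conv_le c \<nu> \<nu>')
    finally have "s d x \<le> 2 * Q * (log_weight c x / (1 + x\<^sup>2))"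
      by simp
    moreover have "0 \<le> s d x"
      using log_weight_nonneg[OF c, of x] by (simp add: s_def)
    ultimately show "norm (s d x) \<le> 2 * Q * (log_weight c x / (1 + x\<^sup>2))"
      by simp
  qed
  have "(\<lambda>d. integral\<^sup>L lborel (s d)) \<longlonglongrightarrow> integral\<^sup>L lborel (\<lambda>x. 0 :: real)"
    using integral_dominated_convergence[OF _ s_meas dom s_lim s_bound] by simp
  then show ?thesis
    by (simp add: s_def[abs_def])
qed

lemma moment2_bounded:
  fixes \<nu> \<nu>' :: "nat \<Rightarrow> real measure"
  assumes "\<And>d. borel_prob (\<nu>' d)" "\<And>d. supp_within (\<nu>' d) M"
    and "(\<lambda>d. moment 2 (\<nu> d) - moment 2 (\<nu>' d)) \<longlonglongrightarrow> 0"
  obtains m where "\<And>d. moment 2 (\<nu> d) \<le> m" "\<And>d. moment 2 (\<nu>' d) \<le> m"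
proof -
  have "Bseq (\<lambda>d. moment 2 (\<nu> d) - moment 2 (\<nu>' d))"
    using convergent_imp_Bseq[OF convergentI[OF assms(3)]] .
  then obtain b where b: "\<And>d. \<bar>moment 2 (\<nu> d) - moment 2 (\<nu>' d)\<bar> \<le> b"
    unfolding Bseq_def by auto
  have m': "moment 2 (\<nu>' d) \<le> M\<^sup>2" for d
    using supp_within_moment_even_le[OF assms(1,2), of 1 d] by simp
  show ?thesis
  proof (rule that)
    show "moment 2 (\<nu> d) \<le> M\<^sup>2 + b" "moment 2 (\<nu>' d) \<le> M\<^sup>2 + b" for d
      using b[of d] m'[of d] unfolding abs_le_iff by linarith+
  qed
qed

lemma tendsto_Poisson_conv_diff_of_moments:
  fixes \<nu> \<nu>' :: "nat \<Rightarrow> real measure"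
  assumes "\<And>d. borel_prob (\<nu> d)" "\<And>d k. integrable (\<nu> d) (\<lambda>x. x ^ k)"
    and "\<And>d. borel_prob (\<nu>' d)" "M' > 0" "\<And>d. supp_within (\<nu>' d) M'"
    and "\<And>k. (\<lambda>d. moment k (\<nu> d) - moment k (\<nu>' d)) \<longlonglongrightarrow> 0"
    and "\<gamma> > 0"
  shows "(\<lambda>d. Poisson_conv \<gamma> (\<nu> d) x - Poisson_conv \<gamma> (\<nu>' d) x) \<longlonglongrightarrow> 0"
  unfolding Poisson_conv_def
proof (rule tendsto_integral_diff_of_moments[OF assms(1-6)])
  show "continuous_on UNIV (\<lambda>t. Poisson \<gamma> (x - t))"
    by (intro continuous_on_compose2[OF Poisson_continuous_on[OF assms(7)]] continuous_intros) auto
  show "\<bar>Poisson \<gamma> (x - t)\<bar> \<le> 1 / (pi * \<gamma>)" for t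
    using Poisson_pos[OF assms(7)] Poisson_le[OF assms(7)] by (simp add: abs_of_pos)
qed

lemma SUP_abs_H_diff_le:
  assumes "\<gamma> > 0" "M \<ge> 0"
    and "borel_prob \<nu>" "integrable \<nu> (\<lambda>t. t\<^sup>2)" "borel_prob \<nu>'" "integrable \<nu>' (\<lambda>t. t\<^sup>2)"
  shows "(SUP \<mu>\<in>B M. ereal \<bar>H \<gamma> \<nu> \<mu> - H \<gamma> \<nu>' \<mu>\<bar>)
    \<le> ereal (\<integral>x. log_weight (ell_const \<gamma> M) x * \<bar>Poisson_conv \<gamma> \<nu> x - Poisson_conv \<gamma> \<nu>' x\<bar> \<partial>lborel)"
proof (rule SUP_least)
  fix \<mu>
  assume "\<mu> \<in> B M"
  from abs_H_diff_le[OF this assms]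
  show "ereal \<bar>H \<gamma> \<nu> \<mu> - H \<gamma> \<nu>' \<mu>\<bar>
      \<le> ereal (\<integral>x. log_weight (ell_const \<gamma> M) x * \<bar>Poisson_conv \<gamma> \<nu> x - Poisson_conv \<gamma> \<nu>' x\<bar> \<partial>lborel)"
    by simp
qed

theorem mainTheorem7:
  fixes \<nu> \<nu>b :: "nat \<Rightarrow> real measure" and M' :: real
  assumes "\<And>d. borel_prob (\<nu> d)" and "\<And>d. borel_prob (\<nu>b d)"
    and "\<And>d k. integrable (\<nu> d) (\<lambda>x. x ^ k)"
    and "\<And>d. compactly_supported (\<nu>b d)"
    and "\<And>k. (\<lambda>d. \<bar>moment k (\<nu> d) - moment k (\<nu>b d)\<bar>) \<longlonglongrightarrow> 0"
    and "M' > 0" and "\<And>d. supp_within (\<nu>b d) M'"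
  shows "\<forall>\<gamma>>0. \<forall>M>0.
    (\<lambda>d. SUP \<mu>\<in>B M. ereal \<bar>H \<gamma> (\<nu> d) \<mu> - H \<gamma> (\<nu>b d) \<mu>\<bar>) \<longlonglongrightarrow> 0"
proof (intro allI impI)
  fix \<gamma> M :: real
  assume "\<gamma> > 0" "M > 0"
  have moments: "(\<lambda>d. moment k (\<nu> d) - moment k (\<nu>b d)) \<longlonglongrightarrow> 0" for k
    using assms(5) by (simp add: tendsto_rabs_zero_iff)
  have int2: "integrable (\<nu> d) (\<lambda>t. t\<^sup>2)" "integrable (\<nu>b d) (\<lambda>t. t\<^sup>2)" for d
    using assms(3) supp_within_integrable_power[OF assms(2,7)] by auto
  obtain m where m: "\<And>d. moment 2 (\<nu> d) \<le> m" "\<And>d. moment 2 (\<nu>b d) \<le> m"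
    using moment2_bounded[OF assms(2,7) moments] by blast
  have "M \<ge> 0" "ell_const \<gamma> M \<ge> 0"
    using \<open>M > 0\<close> by (simp_all add: ell_const_def)
  from tendsto_integral_log_weight_Poisson_conv_diff[OF this(2) \<open>\<gamma> > 0\<close> assms(1) int2(1) m(1)
      assms(2) int2(2) m(2) tendsto_Poisson_conv_diff_of_moments[OF assms(1,3,2,6,7) moments \<open>\<gamma> > 0\<close>]]
  have lim: "(\<lambda>d. ereal (\<integral>x. log_weight (ell_const \<gamma> M) x
      * \<bar>Poisson_conv \<gamma> (\<nu> d) x - Poisson_conv \<gamma> (\<nu>b d) x\<bar> \<partial>lborel)) \<longlonglongrightarrow> 0"
    unfolding zero_ereal_def by (rule tendsto_ereal)
  have lower: "0 \<le> (SUP \<mu>\<in>B M. ereal \<bar>H \<gamma> (\<nu> d) \<mu> - H \<gamma> (\<nu>b d) \<mu>\<bar>)" for d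
    by (rule SUP_upper2[OF return_in_B[OF \<open>M \<ge> 0\<close>]]) simp
  note upper = SUP_abs_H_diff_le[OF \<open>\<gamma> > 0\<close> \<open>M \<ge> 0\<close> assms(1) int2(1) assms(2) int2(2)]
  show "(\<lambda>d. SUP \<mu>\<in>B M. ereal \<bar>H \<gamma> (\<nu> d) \<mu> - H \<gamma> (\<nu>b d) \<mu>\<bar>) \<longlonglongrightarrow> 0"
    by (rule tendsto_sandwich[OF always_eventually always_eventually tendsto_const lim])
       (simp_all add: lower upper)
qed

end
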